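(* Let $(A,[\cdot,\cdot])$ be a Malcev algebra, $(V,\rho)$ a representation of $A$, and $T:V\to A$ a linear map. Then $T$ is an $\mathcal{O}$-operator of $A$ associated to $\rho$ if and only if $r=T-\sigma(T)$ is a skew-symmetric solution of the Malcev Yang-Baxter equation in the Malcev algebra $A\ltimes_{\rho^*}V^*$.
   Context: Field $\mathbb{K}$ of characteristic zero, finite-dimensional spaces. A Malcev algebra is a vector space with an anti-symmetric bracket satisfying $J(x,y,[x,z])=[J(x,y,z),x]$, $J(x,y,z)=[[x,y],z]+[[z,x],y]+[[y,z],x]$. A representation of $A$ on $V$ is a linear map $\rho:A\to\mathrm{End}(V)$ with $\rho([[x,y],z])=\rho(x)\rho(y)\rho(z)-\rho(z)\rho(x)\rho(y)+\rho(y)\rho([z,x])-\rho([y,z])\rho(x)$. Its dual $\rho^*:A\to\mathrm{End}(V^* )$ is $\langle\rho^*(x)a^*,b\rangle=-\langle a^*,\rho(x)b\rangle$, again a representation. $A\ltimes_{\rho^*}V^*$ denotes $A\oplus V^*$ with bracket $[x+a^*,y+b^*]=[x,y]+\rho^*(x)b^*-\rho^*(y)a^*$ (a Malcev algebra). A linear map $T:V\to A$ is an $\mathcal{O}$-operator associated to $\rho$ if $[T(a),T(b)]=T(\rho(T(a))b-\rho(T(b))a)$ for all $a,b\in V$. Via $\mathrm{Hom}(V,A)\cong A\otimes V^*$, $T$ is identified with $\sum_i T(v_i)\otimes v_i^*\in (A\ltimes_{\rho^*}V^* )^{\otimes 2}$ for a basis $\{v_i\}$ of $V$ with dual basis $\{v_i^*\}$,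 and $\sigma(T)=\sum_i v_i^*\otimes T(v_i)$. For $r=\sum_i x_i\otimes y_i$ in $L\otimes L$ ($L$ a Malcev algebra), $r$ solves the Malcev Yang-Baxter equation if $\sum_{i,j}[x_i,x_j]\otimes y_i\otimes y_j+\sum_{i,j}x_i\otimes[y_i,x_j]\otimes y_j+\sum_{i,j}x_i\otimes x_j\otimes[y_i,y_j]=0$; skew-symmetric means $r=-\sigma(r)$. *)

theory Defs
  imports "HOL-Library.Function_Algebras"
begin

text \<open>Finite-dimensional spaces over a field 'k of characteristic zero are modelled
in coordinates: A = ('i \<Rightarrow> 'k), V = ('j \<Rightarrow> 'k) with finite index types.
The dual V* is identified with ('j \<Rightarrow> 'k) via the pairing below, so that the
standard basis vectors unitv j of V* form the dual basis of the standard basis of V.\<close>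

definition smult :: "'k::times \<Rightarrow> ('i \<Rightarrow> 'k) \<Rightarrow> ('i \<Rightarrow> 'k)" where
  "smult c x = (\<lambda>i. c * x i)"

definition linear_map :: "(('i \<Rightarrow> 'k::field) \<Rightarrow> ('j \<Rightarrow> 'k)) \<Rightarrow> bool" where
  "linear_map f \<longleftrightarrow> (\<forall>x y. f (x + y) = f x + f y) \<and> (\<forall>c x. f (smult c x) = smult c (f x))"

definition bilinear_op :: "(('i \<Rightarrow> 'k::field) \<Rightarrow> ('i \<Rightarrow> 'k) \<Rightarrow> ('i \<Rightarrow> 'k)) \<Rightarrow> bool" where
  "bilinear_op b \<longleftrightarrow> (\<forall>x. linear_map (b x)) \<and> (\<forall>y. linear_map (\<lambda>x. b x y))"

definition jac :: "('a \<Rightarrow> 'a \<Rightarrow> 'a::plus) \<Rightarrow> 'a \<Rightarrow> 'a \<Rightarrow> 'a \<Rightarrow> 'a" where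
  "jac br x y z = br (br x y) z + br (br z x) y + br (br y z) x"

definition malcev_algebra :: "(('i \<Rightarrow> 'k::field) \<Rightarrow> ('i \<Rightarrow> 'k) \<Rightarrow> ('i \<Rightarrow> 'k)) \<Rightarrow> bool" where
  "malcev_algebra br \<longleftrightarrow> bilinear_op br \<and> (\<forall>x y. br x y = - br y x)
     \<and> (\<forall>x y z. jac br x y (br x z) = br (jac br x y z) x)"

definition representation ::
  "(('i \<Rightarrow> 'k::field) \<Rightarrow> ('i \<Rightarrow> 'k) \<Rightarrow> ('i \<Rightarrow> 'k)) \<Rightarrow> (('i \<Rightarrow> 'k) \<Rightarrow> ('j \<Rightarrow> 'k) \<Rightarrow> ('j \<Rightarrow> 'k)) \<Rightarrow> bool" where
  "representation br \<rho> \<longleftrightarrow> (\<forall>x. linear_map (\<rho> x)) \<and>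
     (\<forall>x y. \<rho> (x + y) = \<rho> x + \<rho> y) \<and> (\<forall>c x. \<rho> (smult c x) = (\<lambda>v. smult c (\<rho> x v))) \<and>
     (\<forall>x y z. \<rho> (br (br x y) z) =
        \<rho> x \<circ> \<rho> y \<circ> \<rho> z - \<rho> z \<circ> \<rho> x \<circ> \<rho> y + \<rho> y \<circ> \<rho> (br z x) - \<rho> (br y z) \<circ> \<rho> x)"

definition unitv :: "'j \<Rightarrow> 'j \<Rightarrow> 'k::zero_neq_one" where
  "unitv j = (\<lambda>l. if l = j then 1 else 0)"

definition pairing :: "('j::finite \<Rightarrow> 'k::comm_ring_1) \<Rightarrow> ('j \<Rightarrow> 'k) \<Rightarrow> 'k" where
  "pairing a b = (\<Sum>j\<in>UNIV. a j * b j)"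

definition dual_rep ::
  "(('i \<Rightarrow> 'k) \<Rightarrow> ('j::finite \<Rightarrow> 'k::comm_ring_1) \<Rightarrow> ('j \<Rightarrow> 'k)) \<Rightarrow> ('i \<Rightarrow> 'k) \<Rightarrow> ('j \<Rightarrow> 'k) \<Rightarrow> ('j \<Rightarrow> 'k)" where
  "dual_rep \<rho> x a = (\<lambda>j. - pairing a (\<rho> x (unitv j)))"

definition sd_br ::
  "(('i \<Rightarrow> 'k) \<Rightarrow> ('i \<Rightarrow> 'k) \<Rightarrow> ('i \<Rightarrow> 'k)) \<Rightarrow> (('i \<Rightarrow> 'k) \<Rightarrow> ('j::finite \<Rightarrow> 'k::comm_ring_1) \<Rightarrow> ('j \<Rightarrow> 'k))
   \<Rightarrow> ('i \<Rightarrow> 'k) \<times> ('j \<Rightarrow> 'k) \<Rightarrow> ('i \<Rightarrow> 'k) \<times> ('j \<Rightarrow> 'k) \<Rightarrow> ('i \<Rightarrow> 'k) \<times> ('j \<Rightarrow> 'k)" where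
  "sd_br br \<rho> u w = (br (fst u) (fst w), dual_rep \<rho> (fst u) (snd w) - dual_rep \<rho> (fst w) (snd u))"

definition O_operator ::
  "(('i \<Rightarrow> 'k) \<Rightarrow> ('i \<Rightarrow> 'k) \<Rightarrow> ('i \<Rightarrow> 'k)) \<Rightarrow> (('i \<Rightarrow> 'k) \<Rightarrow> ('j \<Rightarrow> 'k::ab_group_add) \<Rightarrow> ('j \<Rightarrow> 'k))
   \<Rightarrow> (('j \<Rightarrow> 'k) \<Rightarrow> ('i \<Rightarrow> 'k)) \<Rightarrow> bool" where
  "O_operator br \<rho> T \<longleftrightarrow> (\<forall>a b. br (T a) (T b) = T (\<rho> (T a) b - \<rho> (T b) a))"

text \<open>Coordinates of L = A \<oplus> V* w.r.t. its standard basis indexed by 'i + 'j;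
 tensors in L\<otimes>L and L\<otimes>L\<otimes>L are given by their coefficient arrays.\<close>
definition coordL :: "('i \<Rightarrow> 'k) \<times> ('j \<Rightarrow> 'k) \<Rightarrow> 'i + 'j \<Rightarrow> 'k" where
  "coordL u p = (case p of Inl i \<Rightarrow> fst u i | Inr j \<Rightarrow> snd u j)"

definition basisL :: "'i + 'j \<Rightarrow> ('i \<Rightarrow> 'k::zero_neq_one) \<times> ('j \<Rightarrow> 'k)" where
  "basisL p = (case p of Inl i \<Rightarrow> (unitv i, 0) | Inr j \<Rightarrow> (0, unitv j))"

definition tens2 :: "('i \<Rightarrow> 'k::times) \<times> ('j \<Rightarrow> 'k) \<Rightarrow> ('i \<Rightarrow> 'k) \<times> ('j \<Rightarrow> 'k) \<Rightarrow> 'i + 'j \<Rightarrow> 'i + 'j \<Rightarrow> 'k" where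
  "tens2 u v = (\<lambda>p q. coordL u p * coordL v q)"

definition tens3 :: "('i \<Rightarrow> 'k::times) \<times> ('j \<Rightarrow> 'k) \<Rightarrow> ('i \<Rightarrow> 'k) \<times> ('j \<Rightarrow> 'k) \<Rightarrow> ('i \<Rightarrow> 'k) \<times> ('j \<Rightarrow> 'k)
   \<Rightarrow> 'i + 'j \<Rightarrow> 'i + 'j \<Rightarrow> 'i + 'j \<Rightarrow> 'k" where
  "tens3 u v w = (\<lambda>p q s. coordL u p * coordL v q * coordL w s)"

definition flip2 :: "('p \<Rightarrow> 'p \<Rightarrow> 'k) \<Rightarrow> 'p \<Rightarrow> 'p \<Rightarrow> 'k" where
  "flip2 R = (\<lambda>p q. R q p)"

definition skew_symmetric :: "('p \<Rightarrow> 'p \<Rightarrow> 'k::uminus) \<Rightarrow> bool" where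
  "skew_symmetric R \<longleftrightarrow> R = - flip2 R"

definition T_tensor :: "(('j::finite \<Rightarrow> 'k::comm_ring_1) \<Rightarrow> ('i \<Rightarrow> 'k)) \<Rightarrow> 'i + 'j \<Rightarrow> 'i + 'j \<Rightarrow> 'k" where
  "T_tensor T = (\<Sum>j\<in>UNIV. tens2 (T (unitv j), 0) (0, unitv j))"

text \<open>Malcev Yang-Baxter tensor of r = sum_{p,q} R p q e_p \<otimes> e_q, i.e. with
 x_(p,q) = R p q e_p and y_(p,q) = e_q in the paper's formula (scalars pulled out).\<close>
definition mybe_tensor ::
  "(('i \<Rightarrow> 'k) \<times> ('j \<Rightarrow> 'k) \<Rightarrow> ('i \<Rightarrow> 'k) \<times> ('j \<Rightarrow> 'k) \<Rightarrow> ('i \<Rightarrow> 'k) \<times> ('j \<Rightarrow> 'k))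
   \<Rightarrow> ('i::finite + 'j::finite \<Rightarrow> 'i + 'j \<Rightarrow> 'k::comm_ring_1) \<Rightarrow> 'i + 'j \<Rightarrow> 'i + 'j \<Rightarrow> 'i + 'j \<Rightarrow> 'k" where
  "mybe_tensor L R = (\<lambda>a b c. \<Sum>p\<in>UNIV. \<Sum>q\<in>UNIV. \<Sum>p'\<in>UNIV. \<Sum>q'\<in>UNIV. R p q * R p' q' *
      (tens3 (L (basisL p) (basisL p')) (basisL q) (basisL q') a b c
     + tens3 (basisL p) (L (basisL q) (basisL p')) (basisL q') a b c
     + tens3 (basisL p) (basisL p') (L (basisL q) (basisL q')) a b c))"

definition solves_MYBE where
  "solves_MYBE L R \<longleftrightarrow> mybe_tensor L R = 0"

end

theory Submission
  imports Defs
begin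

(* In the standard basis of A + V*, the only nonzero entries of r = T - sigma(T) are
   r(e_i, v_l* ) = T(v_l)_i and r(v_l*, e_i) = -T(v_l)_i. The bracket of the semidirect product
   maps A x A into A, A x V* into V* and kills V* x V*, so the Malcev Yang-Baxter tensor of r
   can be nonzero only at index triples made of one e_m and two dual vectors v_k*, v_l*, where
   its entry is +-([T v_k, T v_l] - T(rho(T v_k) v_l - rho(T v_l) v_k))_m. Hence the equation
   holds iff the O-operator identity holds on basis vectors, i.e. everywhere by bilinearity;
   skew-symmetry of r is automatic. *)

lemma sum_apply: "(sum f A) x = (\<Sum>a\<in>A. f a x)"
  by (induction A rule: infinite_finite_induct) auto

lemma sum_UNIV_Plus:
  "(\<Sum>p\<in>(UNIV :: ('a::finite + 'b::finite) set). f p) =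
     (\<Sum>i\<in>UNIV. f (Inl i)) + (\<Sum>j\<in>UNIV. f (Inr j))"
  using sum.Plus[of "UNIV :: 'a set" "UNIV :: 'b set" f] by (simp add: o_def)

lemma mult_if_0:
  "x * (if P then y else 0) = (if P then x * y else (0::'a::mult_zero))"
  "(if P then y else 0) * x = (if P then y * x else (0::'a::mult_zero))"
  by auto

lemma sum_if_0: "(\<Sum>x\<in>A. if P then f x else 0) = (if P then sum f A else 0)"
  by simp

lemma linear_map_add: "linear_map f \<Longrightarrow> f (x + y) = f x + f y"
  by (simp add: linear_map_def)

lemma linear_map_smult: "linear_map f \<Longrightarrow> f (smult c x) = smult c (f x)"
  by (simp add: linear_map_def)

lemma linear_map_0: "linear_map f \<Longrightarrow> f 0 = 0"
  using linear_map_add[of f 0 0] by simp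

lemma linear_map_diff: "linear_map f \<Longrightarrow> f (x - y) = f x - f y"
  using linear_map_add[of f "x - y" y] by simp

lemma linear_map_sum: "linear_map f \<Longrightarrow> f (sum g A) = (\<Sum>a\<in>A. f (g a))"
  by (induction A rule: infinite_finite_induct) (auto simp: linear_map_0 linear_map_add)

lemma linear_map_compose: "linear_map f \<Longrightarrow> linear_map g \<Longrightarrow> linear_map (\<lambda>x. f (g x))"
  by (simp add: linear_map_def)

lemma linear_map_fun_diff: "linear_map f \<Longrightarrow> linear_map g \<Longrightarrow> linear_map (\<lambda>x. f x - g x)"
  unfolding linear_map_def smult_def by (auto simp: fun_eq_iff algebra_simps)

lemma sum_smult_unitv:
  "(\<Sum>i\<in>UNIV. smult (x i) (unitv i)) = (x :: 'i::finite \<Rightarrow> 'k::comm_ring_1)"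
  by (rule ext) (simp add: sum_apply smult_def unitv_def mult_if_0)

lemma linear_map_apply_unitv:
  fixes f :: "('i::finite \<Rightarrow> 'k::field) \<Rightarrow> ('j \<Rightarrow> 'k)"
  assumes "linear_map f"
  shows "f x m = (\<Sum>i\<in>UNIV. x i * f (unitv i) m)"
proof -
  have "f x = f (\<Sum>i\<in>UNIV. smult (x i) (unitv i))"
    by (simp only: sum_smult_unitv)
  also have "\<dots> = (\<Sum>i\<in>UNIV. smult (x i) (f (unitv i)))"
    using assms by (simp add: linear_map_sum linear_map_smult)
  finally show ?thesis
    by (simp add: sum_apply smult_def)
qed

lemma bilinear_apply_unitv:
  fixes G :: "('i::finite \<Rightarrow> 'k::field) \<Rightarrow> ('j::finite \<Rightarrow> 'k) \<Rightarrow> ('l \<Rightarrow> 'k)"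
  assumes "\<And>y. linear_map (\<lambda>x. G x y)" and "\<And>x. linear_map (G x)"
  shows "G x y m = (\<Sum>i\<in>UNIV. \<Sum>j\<in>UNIV. x i * y j * G (unitv i) (unitv j) m)"
proof -
  have "G x y m = (\<Sum>i\<in>UNIV. x i * G (unitv i) y m)"
    using linear_map_apply_unitv[OF assms(1)] .
  also have "\<dots> = (\<Sum>i\<in>UNIV. x i * (\<Sum>j\<in>UNIV. y j * G (unitv i) (unitv j) m))"
    using linear_map_apply_unitv[OF assms(2), where x = y] by simp
  finally show ?thesis
    by (simp add: sum_distrib_left mult_ac)
qed

lemma bilinear_eq_0_if_eq_0_on_unitv:
  fixes G :: "('i::finite \<Rightarrow> 'k::field) \<Rightarrow> ('j::finite \<Rightarrow> 'k) \<Rightarrow> ('l \<Rightarrow> 'k)"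
  assumes "\<And>y. linear_map (\<lambda>x. G x y)" and "\<And>x. linear_map (G x)"
    and "\<And>i j. G (unitv i) (unitv j) = 0"
  shows "G x y = 0"
  using bilinear_apply_unitv[OF assms(1,2)] assms(3) by (simp add: fun_eq_iff)

lemma coordL_basisL: "coordL (basisL p) q = (if p = q then 1 else 0)"
  by (cases p; cases q) (auto simp: coordL_def basisL_def unitv_def)

lemma mybe_tensor_apply:
  "mybe_tensor L R a b c =
     (\<Sum>p\<in>UNIV. \<Sum>p'\<in>UNIV. R p b * R p' c * coordL (L (basisL p) (basisL p')) a) +
     (\<Sum>q\<in>UNIV. \<Sum>p'\<in>UNIV. R a q * R p' c * coordL (L (basisL q) (basisL p')) b) +
     (\<Sum>q\<in>UNIV. \<Sum>q'\<in>UNIV. R a q * R b q' * coordL (L (basisL q) (basisL q')) c)"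
  unfolding mybe_tensor_def tens3_def coordL_basisL
  by (simp only: distrib_left sum.distrib)
    (simp add: mult_if_0 sum_if_0 mult_ac cong: if_cong)

lemma skew_symmetric_diff_flip2:
  "skew_symmetric (R - flip2 R :: 'p \<Rightarrow> 'p \<Rightarrow> 'k::ab_group_add)"
  by (simp add: skew_symmetric_def flip2_def fun_eq_iff)

lemma T_tensor_apply:
  "T_tensor T (Inl i) (Inr l) = T (unitv l) i"
  "T_tensor T (Inl i) (Inl i') = 0"
  "T_tensor T (Inr j) (Inr l) = 0"
  "T_tensor T (Inr j) (Inl i) = 0"
  by (simp_all add: T_tensor_def sum_apply tens2_def coordL_def unitv_def mult_if_0)

lemma dual_rep_unitv_apply: "dual_rep \<rho> x (unitv j) l = - \<rho> x (unitv l) j"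
  by (simp add: dual_rep_def pairing_def unitv_def mult_if_0)

locale bilinear_O_setup =
  fixes br :: "('i::finite \<Rightarrow> 'k::field) \<Rightarrow> ('i \<Rightarrow> 'k) \<Rightarrow> ('i \<Rightarrow> 'k)"
    and \<rho> :: "('i \<Rightarrow> 'k) \<Rightarrow> ('j::finite \<Rightarrow> 'k) \<Rightarrow> ('j \<Rightarrow> 'k)"
    and T :: "('j \<Rightarrow> 'k) \<Rightarrow> ('i \<Rightarrow> 'k)"
  assumes bilinear_br: "bilinear_op br"
    and linear_rho: "linear_map (\<rho> x)"
    and linear_rho_left: "linear_map (\<lambda>x. \<rho> x v)"
    and linear_T: "linear_map T"
begin

lemma linear_br_left: "linear_map (\<lambda>x. br x y)"
  using bilinear_br by (simp add: bilinear_op_def)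

lemma linear_br: "linear_map (br x)"
  using bilinear_br by (simp add: bilinear_op_def)

lemma br_0:
  "br x 0 = 0" "br 0 x = 0"
  using linear_map_0[OF linear_br] linear_map_0[OF linear_br_left] by simp_all

lemma dual_rep_0:
  "dual_rep \<rho> x 0 = 0" "dual_rep \<rho> 0 a = 0"
  using linear_map_0[OF linear_rho_left] by (simp_all add: dual_rep_def pairing_def fun_eq_iff)

lemma coordL_sd_br_basisL:
  "coordL (sd_br br \<rho> (basisL (Inl i)) (basisL (Inl i'))) (Inl m) = br (unitv i) (unitv i') m"
  "coordL (sd_br br \<rho> (basisL (Inl i)) (basisL (Inl i'))) (Inr l) = 0"
  "coordL (sd_br br \<rho> (basisL (Inl i)) (basisL (Inr j))) (Inl m) = 0"
  "coordL (sd_br br \<rho> (basisL (Inl i)) (basisL (Inr j))) (Inr l) = - \<rho> (unitv i) (unitv l) j"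
  "coordL (sd_br br \<rho> (basisL (Inr j)) (basisL (Inl i))) (Inl m) = 0"
  "coordL (sd_br br \<rho> (basisL (Inr j)) (basisL (Inl i))) (Inr l) = \<rho> (unitv i) (unitv l) j"
  "coordL (sd_br br \<rho> (basisL (Inr j)) (basisL (Inr j'))) s = 0"
  by (simp_all add: sd_br_def basisL_def coordL_def br_0 dual_rep_0 dual_rep_unitv_apply
      split: sum.split)

definition O_defect :: "('j \<Rightarrow> 'k) \<Rightarrow> ('j \<Rightarrow> 'k) \<Rightarrow> ('i \<Rightarrow> 'k)" where
  "O_defect a b = br (T a) (T b) - T (\<rho> (T a) b - \<rho> (T b) a)"

lemma O_operator_iff_O_defect_eq_0: "O_operator br \<rho> T \<longleftrightarrow> (\<forall>a b. O_defect a b = 0)"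
  by (simp add: O_operator_def O_defect_def)

lemma linear_O_defect_left: "linear_map (\<lambda>a. O_defect a b)"
  unfolding O_defect_def
  by (intro linear_map_fun_diff linear_map_compose[OF linear_br_left linear_T]
      linear_map_compose[OF linear_T] linear_map_compose[OF linear_rho_left linear_T] linear_rho)

lemma linear_O_defect: "linear_map (O_defect a)"
  unfolding O_defect_def
  by (intro linear_map_fun_diff linear_map_compose[OF linear_br linear_T]
      linear_map_compose[OF linear_T] linear_map_compose[OF linear_rho_left linear_T] linear_rho)

lemma T_rho_apply_unitv:
  "T (\<rho> x v) m = (\<Sum>i\<in>UNIV. \<Sum>j\<in>UNIV. T (unitv j) m * x i * \<rho> (unitv i) v j)"
proof -
  have "T (\<rho> x v) m = (\<Sum>j\<in>UNIV. \<rho> x v j * T (unitv j) m)"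
    using linear_map_apply_unitv[OF linear_T] .
  also have "\<dots> = (\<Sum>j\<in>UNIV. (\<Sum>i\<in>UNIV. x i * \<rho> (unitv i) v j) * T (unitv j) m)"
    using linear_map_apply_unitv[OF linear_rho_left, where x = x] by simp
  finally show ?thesis
    by (simp add: sum_distrib_left sum_distrib_right mult_ac
        sum.swap[where A = "UNIV :: 'j set" and B = "UNIV :: 'i set"])
qed

lemma O_defect_unitv_apply:
  "O_defect (unitv k) (unitv l) m =
     br (T (unitv k)) (T (unitv l)) m - T (\<rho> (T (unitv k)) (unitv l)) m
       + T (\<rho> (T (unitv l)) (unitv k)) m"
  by (simp add: O_defect_def linear_map_diff[OF linear_T])

lemma mybe_tensor_components:
  defines "r \<equiv> T_tensor T - flip2 (T_tensor T)"
  shows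
  "mybe_tensor (sd_br br \<rho>) r (Inl m) (Inr k) (Inr l) = O_defect (unitv k) (unitv l) m"
  "mybe_tensor (sd_br br \<rho>) r (Inr k) (Inl m) (Inr l) = - O_defect (unitv k) (unitv l) m"
  "mybe_tensor (sd_br br \<rho>) r (Inr k) (Inr l) (Inl m) = O_defect (unitv k) (unitv l) m"
  "mybe_tensor (sd_br br \<rho>) r (Inl m) (Inl m') c = 0"
  "mybe_tensor (sd_br br \<rho>) r (Inl m) b (Inl m') = 0"
  "mybe_tensor (sd_br br \<rho>) r a (Inl m) (Inl m') = 0"
  "mybe_tensor (sd_br br \<rho>) r (Inr k) (Inr l) (Inr j) = 0"
  unfolding r_def O_defect_unitv_apply T_rho_apply_unitv
    bilinear_apply_unitv[OF linear_br_left linear_br, of "T (unitv k)" "T (unitv l)"]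
  by (simp_all add: mybe_tensor_apply sum_UNIV_Plus flip2_def T_tensor_apply coordL_sd_br_basisL
      sum_negf sum_subtractf mult_ac sum.swap[where A = "UNIV :: 'j set" and B = "UNIV :: 'i set"])

lemma O_operator_iff_O_defect_unitv_eq_0:
  "O_operator br \<rho> T \<longleftrightarrow> (\<forall>k l. O_defect (unitv k) (unitv l) = 0)"
  unfolding O_operator_iff_O_defect_eq_0
  using bilinear_eq_0_if_eq_0_on_unitv[of O_defect, OF linear_O_defect_left linear_O_defect] by blast

lemma solves_MYBE_iff_O_defect_unitv_eq_0:
  "solves_MYBE (sd_br br \<rho>) (T_tensor T - flip2 (T_tensor T)) \<longleftrightarrow>
     (\<forall>k l. O_defect (unitv k) (unitv l) = 0)"
proof
  assume "solves_MYBE (sd_br br \<rho>) (T_tensor T - flip2 (T_tensor T))"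
  then have "mybe_tensor (sd_br br \<rho>) (T_tensor T - flip2 (T_tensor T)) (Inl m) (Inr k) (Inr l) = 0"
    for k l m
    by (simp add: solves_MYBE_def)
  then show "\<forall>k l. O_defect (unitv k) (unitv l) = 0"
    by (simp add: mybe_tensor_components fun_eq_iff)
next
  assume "\<forall>k l. O_defect (unitv k) (unitv l) = 0"
  then have "mybe_tensor (sd_br br \<rho>) (T_tensor T - flip2 (T_tensor T)) a b c = 0" for a b c
    by (cases a; cases b; cases c) (simp_all add: mybe_tensor_components)
  then show "solves_MYBE (sd_br br \<rho>) (T_tensor T - flip2 (T_tensor T))"
    by (simp add: solves_MYBE_def fun_eq_iff)
qed

end

theorem theorem2p10:
  fixes br :: "('i::finite \<Rightarrow> 'k::field_char_0) \<Rightarrow> ('i \<Rightarrow> 'k) \<Rightarrow> ('i \<Rightarrow> 'k)"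
    and \<rho> :: "('i \<Rightarrow> 'k) \<Rightarrow> ('j::finite \<Rightarrow> 'k) \<Rightarrow> ('j \<Rightarrow> 'k)"
    and T :: "('j \<Rightarrow> 'k) \<Rightarrow> ('i \<Rightarrow> 'k)"
  assumes "malcev_algebra br"
    and "representation br \<rho>"
    and "linear_map T"
  shows "O_operator br \<rho> T \<longleftrightarrow>
    (skew_symmetric (T_tensor T - flip2 (T_tensor T)) \<and>
     solves_MYBE (sd_br br \<rho>) (T_tensor T - flip2 (T_tensor T)))"
proof -
  interpret bilinear_O_setup br \<rho> T
  proof
    show "bilinear_op br"
      using assms(1) by (simp add: malcev_algebra_def)
    show "linear_map (\<rho> x)" "linear_map (\<lambda>x. \<rho> x v)" for x v
      using assms(2) by (simp_all add: representation_def linear_map_def smult_def)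
  qed (fact assms(3))
  show ?thesis
    using O_operator_iff_O_defect_unitv_eq_0 solves_MYBE_iff_O_defect_unitv_eq_0
      skew_symmetric_diff_flip2 by blast
qed

end
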